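(* For every integer $n\ge 2$, the clique number of $D_n$ is $$Cl(D_n)=\tau(n)+\pi(n)-\omega(n)+\gamma_1(n).$$ In particular, if $n$ is prime, $Cl(D_n)=\pi(n)+1$.
   Context: $D_n$ is the graph with vertex set $\{1,\dots,n\}$ in which distinct $a,b$ are adjacent iff $\gcd(a,b)\mid n$ (the maximal Diophantine graph of order $n$). $Cl(G)$ is the maximum order of a complete subgraph of $G$. $\pi(x)$ is the number of primes $\le x$, $\omega(n)$ the number of distinct primes dividing $n$, $\tau(n)$ the number of positive divisors of $n$. For a prime $p$, $\acute v_p(n):=v_p(n)+1$ where $v_p$ is the $p$-adic valuation, and for real $0<x<n$, $\gamma_x(n):=\left|\{p^{\acute v_p(n)} : p \text{ prime},\ p\mid n,\ x<p^{\acute v_p(n)}<n\}\right|$. *)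

theory Defs
  imports Complex_Main "HOL-Computational_Algebra.Primes"
begin

text \<open>Simple graph given by a vertex set and a (symmetric, irreflexive) adjacency relation.\<close>

definition is_clique :: "'a set \<Rightarrow> ('a \<Rightarrow> 'a \<Rightarrow> bool) \<Rightarrow> 'a set \<Rightarrow> bool" where
  "is_clique V adj S \<longleftrightarrow> S \<subseteq> V \<and> (\<forall>a\<in>S. \<forall>b\<in>S. a \<noteq> b \<longrightarrow> adj a b)"

text \<open>Clique number: maximum order of a complete subgraph (V assumed finite).\<close>
definition clique_number :: "'a set \<Rightarrow> ('a \<Rightarrow> 'a \<Rightarrow> bool) \<Rightarrow> nat" where
  "clique_number V adj = Max (card ` {S. is_clique V adj S})"

definition D_vertices :: "nat \<Rightarrow> nat set" where
  "D_vertices n = {1..n}"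

definition D_adj :: "nat \<Rightarrow> nat \<Rightarrow> nat \<Rightarrow> bool" where
  "D_adj n a b \<longleftrightarrow> a \<noteq> b \<and> gcd a b dvd n"

definition Cl_D :: "nat \<Rightarrow> nat" where
  "Cl_D n = clique_number (D_vertices n) (D_adj n)"

definition prime_pi :: "nat \<Rightarrow> nat" where
  "prime_pi x = card {p. prime p \<and> p \<le> x}"

definition omega :: "nat \<Rightarrow> nat" where
  "omega n = card (prime_factors n)"

definition tau :: "nat \<Rightarrow> nat" where
  "tau n = card {d. d dvd n}"

definition vacute :: "nat \<Rightarrow> nat \<Rightarrow> nat" where
  "vacute p n = multiplicity p n + 1"

definition gamma :: "real \<Rightarrow> nat \<Rightarrow> nat" where
  "gamma x n = card {p ^ vacute p n | p. prime p \<and> p dvd n \<and>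
                        x < real (p ^ vacute p n) \<and> p ^ vacute p n < n}"

end

theory Submission
  imports Defs
begin

text \<open>Write \<open>Q p = p ^ vacute p n\<close>. A positive \<open>x\<close> divides \<open>n\<close> iff no \<open>Q p\<close> divides \<open>x\<close>,
  so \<open>gcd a b dvd n\<close> iff \<open>a\<close> and \<open>b\<close> share no \<open>Q p\<close>. Hence the divisors of \<open>n\<close> together
  with all \<open>Q p \<le> n\<close> form a clique, and in any clique the non-divisors are pairwise separated
  by distinct primes \<open>p\<close> with \<open>Q p \<le> n\<close>; so
  \<open>Cl(D\<^sub>n) = \<tau>(n) + #{p prime. Q p \<le> n}\<close>. For \<open>p \<nmid> n\<close> one has \<open>Q p = p\<close>, while for
  \<open>p | n\<close> the power \<open>Q p\<close> never equals \<open>n\<close>; counting the two kinds of primes gives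
  \<open>\<pi>(n) - \<omega>(n) + \<gamma>\<^sub>1(n)\<close>.\<close>

lemma clique_number_eqI:
  assumes "finite V" "is_clique V adj S"
    and "\<And>T. is_clique V adj T \<Longrightarrow> card T \<le> card S"
  shows "clique_number V adj = card S"
  unfolding clique_number_def
proof (rule Max_eqI)
  have "{T. is_clique V adj T} \<subseteq> Pow V"
    unfolding is_clique_def by auto
  then show "finite (card ` {T. is_clique V adj T})"
    using assms(1) finite_subset by blast
qed (use assms(2,3) in auto)

lemma prime_dvd_prime_power_imp_eq:
  fixes p q :: nat
  assumes "prime p" "prime q" "k > 0" "p ^ k dvd q ^ l"
  shows "p = q"
proof -
  have "p dvd q ^ l"
    using assms(3,4) dvd_power dvd_trans by blast
  then have "p dvd q"
    using assms(1) prime_dvd_power by blast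
  then show ?thesis
    using assms(1,2) primes_dvd_imp_eq by blast
qed

lemma vacute_pos: "0 < vacute p n"
  by (simp add: vacute_def)

lemma vacute_power_inj:
  fixes p q n :: nat
  assumes "prime p" "prime q" "p ^ vacute p n = q ^ vacute q n"
  shows "p = q"
  using prime_dvd_prime_power_imp_eq[OF assms(1,2) vacute_pos, of p n "vacute q n"] assms(3)
  by simp

lemma le_vacute_power: "prime p \<Longrightarrow> p \<le> (p::nat) ^ vacute p n"
  by (simp add: vacute_def prime_gt_0_nat Suc_le_eq)

lemma vacute_power_pos: "prime p \<Longrightarrow> 0 < (p::nat) ^ vacute p n"
  by (simp add: prime_gt_0_nat)

lemma vacute_power_not_dvd: "\<not> p dvd n \<Longrightarrow> (p::nat) ^ vacute p n = p"
  by (simp add: vacute_def not_dvd_imp_multiplicity_0)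

lemma finite_primes_with_small_vacute_power:
  "finite {p::nat. prime p \<and> p ^ vacute p n \<le> n}"
  by (rule finite_subset[of _ "{..n}"]) (auto dest: le_vacute_power[of _ n])

lemma vacute_power_dvd_iff:
  fixes p n x :: nat
  assumes "prime p" "x > 0"
  shows "p ^ vacute p n dvd x \<longleftrightarrow> multiplicity p n < multiplicity p x"
  using power_dvd_iff_le_multiplicity[of x p "multiplicity p n + 1"] assms
    prime_gt_1_nat[OF assms(1)]
  by (simp add: vacute_def Suc_le_eq)

lemma vacute_power_not_dvd_self:
  fixes n p :: nat
  assumes "n > 0" "prime p"
  shows "\<not> p ^ vacute p n dvd n"
  using vacute_power_dvd_iff[OF assms(2,1)] by simp

lemma dvd_iff_no_vacute_power_dvd:
  fixes n x :: nat
  assumes "n > 0" "x > 0"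
  shows "x dvd n \<longleftrightarrow> (\<forall>p. prime p \<longrightarrow> \<not> p ^ vacute p n dvd x)"
proof
  assume "x dvd n"
  then show "\<forall>p. prime p \<longrightarrow> \<not> p ^ vacute p n dvd x"
    using vacute_power_not_dvd_self[OF assms(1)] dvd_trans[of _ x n] by blast
next
  assume no_power: "\<forall>p. prime p \<longrightarrow> \<not> p ^ vacute p n dvd x"
  show "x dvd n"
  proof (rule multiplicity_le_imp_dvd)
    fix p :: nat assume "prime p"
    then show "multiplicity p x \<le> multiplicity p n"
      using no_power vacute_power_dvd_iff[OF \<open>prime p\<close> assms(2), of n] by auto
  qed (use assms in simp)
qed

lemma gcd_dvd_iff_no_common_vacute_power:
  fixes n a b :: nat
  assumes "n > 0" "a > 0"
  shows "gcd a b dvd n \<longleftrightarrow>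
    (\<forall>p. prime p \<longrightarrow> \<not> (p ^ vacute p n dvd a \<and> p ^ vacute p n dvd b))"
  using dvd_iff_no_vacute_power_dvd[OF assms(1), of "gcd a b"] assms by simp

lemma is_clique_D_divisors_Un_vacute_powers:
  fixes n :: nat
  assumes "n > 0"
  shows "is_clique (D_vertices n) (D_adj n)
    ({d. d dvd n} \<union> (\<lambda>p. p ^ vacute p n) ` {p. prime p \<and> p ^ vacute p n \<le> n})"
    (is "is_clique _ _ ?S")
  unfolding is_clique_def
proof (intro conjI ballI impI)
  have pos: "x > 0" if "x \<in> ?S" for x
    using that assms vacute_power_pos by (auto intro: Nat.gr0I simp: prime_gt_0_nat)
  show "?S \<subseteq> D_vertices n"
  proof
    fix x assume "x \<in> ?S"
    then show "x \<in> D_vertices n"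
      using pos[OF \<open>x \<in> ?S\<close>] assms by (auto simp: D_vertices_def intro: dvd_imp_le)
  qed
  fix a b assume a: "a \<in> ?S" and b: "b \<in> ?S" and "a \<noteq> b"
  have "\<not> (p ^ vacute p n dvd a \<and> p ^ vacute p n dvd b)" if p: "prime p" for p
  proof
    assume common: "p ^ vacute p n dvd a \<and> p ^ vacute p n dvd b"
    then have "\<not> a dvd n" "\<not> b dvd n"
      using dvd_iff_no_vacute_power_dvd[OF assms pos[OF a]]
        dvd_iff_no_vacute_power_dvd[OF assms pos[OF b]] p by blast+
    then obtain q r where q: "prime q" "a = q ^ vacute q n" and r: "prime r" "b = r ^ vacute r n"
      using a b by auto
    have "p = q"
      using prime_dvd_prime_power_imp_eq[OF p q(1) vacute_pos, of p n "vacute q n"] common q(2)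
      by simp
    moreover have "p = r"
      using prime_dvd_prime_power_imp_eq[OF p r(1) vacute_pos, of p n "vacute r n"] common r(2)
      by simp
    ultimately show False using \<open>a \<noteq> b\<close> q(2) r(2) by simp
  qed
  then show "D_adj n a b"
    using gcd_dvd_iff_no_common_vacute_power[OF assms pos[OF a]] \<open>a \<noteq> b\<close>
    by (simp add: D_adj_def)
qed

text \<open>Each non-divisor in a clique is assigned a prime \<open>p\<close> with \<open>p ^ vacute p n\<close> dividing it;
  two vertices with the same prime would have a gcd not dividing \<open>n\<close>.\<close>

lemma card_clique_D_le:
  fixes n :: nat
  assumes "n > 0" and clique: "is_clique (D_vertices n) (D_adj n) S"
  shows "card S \<le> tau n + card {p. prime p \<and> p ^ vacute p n \<le> n}"
proof -
  define F where "F = {d. d dvd n}"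
  define P where "P = {p. prime p \<and> p ^ vacute p n \<le> n}"
  have S: "S \<subseteq> {1..n}" "finite S"
    using clique finite_subset unfolding is_clique_def D_vertices_def by auto
  have finP: "finite P"
    unfolding P_def by (rule finite_primes_with_small_vacute_power)
  have "\<exists>p. prime p \<and> p ^ vacute p n dvd x" if "x \<in> S - F" for x
    using that S dvd_iff_no_vacute_power_dvd[OF assms(1), of x] unfolding F_def by auto
  then obtain f where f: "\<And>x. x \<in> S - F \<Longrightarrow> prime (f x) \<and> f x ^ vacute (f x) n dvd x"
    by metis
  have "inj_on f (S - F)"
  proof (rule inj_onI, rule ccontr)
    fix x y assume x: "x \<in> S - F" and y: "y \<in> S - F" and "f x = f y" "x \<noteq> y"
    then have "gcd x y dvd n"
      using clique unfolding is_clique_def D_adj_def by auto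
    then show False
      using gcd_dvd_iff_no_common_vacute_power[OF assms(1), of x y] f[OF x] f[OF y]
        \<open>f x = f y\<close> x S by auto
  qed
  moreover have "f ` (S - F) \<subseteq> P"
  proof
    fix p assume "p \<in> f ` (S - F)"
    then obtain x where x: "x \<in> S - F" "p = f x" by auto
    moreover have "x > 0" using x S by auto
    ultimately have "p ^ vacute p n \<le> x"
      using f[OF x(1)] dvd_imp_le by blast
    then show "p \<in> P"
      using f[OF x(1)] x S unfolding P_def by auto
  qed
  ultimately have "card (S - F) \<le> card P"
    using finP card_inj_on_le by blast
  moreover have "card (S \<inter> F) \<le> card F"
    using assms(1) by (intro card_mono) (auto simp: F_def)
  ultimately show ?thesis
    using card_Int_Diff[OF S(2), of F] unfolding tau_def F_def P_def by simp
qed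

lemma Cl_D_eq_tau_plus_card:
  fixes n :: nat
  assumes "n > 0"
  shows "Cl_D n = tau n + card {p. prime p \<and> p ^ vacute p n \<le> n}"
proof -
  let ?P = "{p. prime p \<and> p ^ vacute p n \<le> n}"
  let ?S = "{d. d dvd n} \<union> (\<lambda>p. p ^ vacute p n) ` ?P"
  have "{d. d dvd n} \<inter> (\<lambda>p. p ^ vacute p n) ` ?P = {}"
    using vacute_power_not_dvd_self[OF assms] by auto
  moreover have "inj_on (\<lambda>p. p ^ vacute p n) ?P"
    using vacute_power_inj by (intro inj_onI) blast
  ultimately have "card ?S = tau n + card ?P"
    using assms finite_primes_with_small_vacute_power[of n]
    by (simp add: card_Un_disjoint card_image tau_def)
  then have "clique_number (D_vertices n) (D_adj n) = card ?S"
    using card_clique_D_le[OF assms]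
    by (intro clique_number_eqI is_clique_D_divisors_Un_vacute_powers assms)
      (simp_all add: D_vertices_def)
  then show ?thesis
    unfolding Cl_D_def \<open>card ?S = tau n + card ?P\<close> .
qed

lemma primes_with_small_vacute_power_eq:
  fixes n :: nat
  assumes "n > 0"
  shows "{p. prime p \<and> p ^ vacute p n \<le> n} =
    ({p. prime p \<and> p \<le> n} - prime_factors n) \<union> {p. prime p \<and> p dvd n \<and> p ^ vacute p n \<le> n}"
proof (intro set_eqI iffI)
  fix p assume "p \<in> {p. prime p \<and> p ^ vacute p n \<le> n}"
  then show "p \<in> ({p. prime p \<and> p \<le> n} - prime_factors n) \<union>
      {p. prime p \<and> p dvd n \<and> p ^ vacute p n \<le> n}"
    using assms le_vacute_power[of p n] by (auto simp: prime_factors_dvd)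
next
  fix p assume "p \<in> ({p. prime p \<and> p \<le> n} - prime_factors n) \<union>
      {p. prime p \<and> p dvd n \<and> p ^ vacute p n \<le> n}"
  then show "p \<in> {p. prime p \<and> p ^ vacute p n \<le> n}"
    using assms vacute_power_not_dvd[of p n] by (auto simp: prime_factors_dvd)
qed

lemma gamma_one_eq_card:
  fixes n :: nat
  assumes "n > 0"
  shows "gamma 1 n = card {p. prime p \<and> p dvd n \<and> p ^ vacute p n \<le> n}"
proof -
  let ?B = "{p. prime p \<and> p dvd n \<and> p ^ vacute p n \<le> n}"
  have "1 < real (p ^ vacute p n) \<and> p ^ vacute p n < n \<longleftrightarrow> p ^ vacute p n \<le> n"
    if "prime p" for p
  proof -
    have "1 < p ^ vacute p n"
      using prime_gt_1_nat[OF that] le_vacute_power[OF that] by (rule less_le_trans)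
    then have "1 < real (p ^ vacute p n)"
      by (metis of_nat_1 of_nat_less_iff)
    moreover have "p ^ vacute p n \<noteq> n"
      using vacute_power_not_dvd_self[OF assms that] by auto
    ultimately show ?thesis by auto
  qed
  then have "{p ^ vacute p n | p. prime p \<and> p dvd n \<and> 1 < real (p ^ vacute p n)
      \<and> p ^ vacute p n < n} = (\<lambda>p. p ^ vacute p n) ` ?B"
    by blast
  moreover have "inj_on (\<lambda>p. p ^ vacute p n) ?B"
    using vacute_power_inj by (intro inj_onI) blast
  ultimately show ?thesis
    by (simp add: gamma_def card_image)
qed

lemma card_primes_with_small_vacute_power:
  fixes n :: nat
  assumes "n > 0"
  shows "card {p. prime p \<and> p ^ vacute p n \<le> n} = prime_pi n - omega n + gamma 1 n"
    and "omega n \<le> prime_pi n"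
proof -
  define A where "A = {p::nat. prime p \<and> p \<le> n}"
  define B where "B = {p. prime p \<and> p dvd n \<and> p ^ vacute p n \<le> n}"
  have "finite A" unfolding A_def by auto
  moreover have "prime_factors n \<subseteq> A"
    using assms by (auto simp: A_def prime_factors_dvd intro: dvd_imp_le)
  moreover have "B \<subseteq> A"
    using le_vacute_power unfolding A_def B_def by (auto intro: order_trans)
  moreover have "(A - prime_factors n) \<inter> B = {}"
    using assms unfolding B_def by (auto simp: prime_factors_dvd)
  ultimately have "card ((A - prime_factors n) \<union> B) = card A - card (prime_factors n) + card B"
    by (simp add: card_Un_disjoint card_Diff_subset finite_subset)
  then show "card {p. prime p \<and> p ^ vacute p n \<le> n} = prime_pi n - omega n + gamma 1 n"
    using primes_with_small_vacute_power_eq[OF assms] gamma_one_eq_card[OF assms]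
    unfolding A_def B_def prime_pi_def omega_def by simp
  show "omega n \<le> prime_pi n"
    using \<open>finite A\<close> \<open>prime_factors n \<subseteq> A\<close> card_mono
    unfolding A_def prime_pi_def omega_def by blast
qed

lemma tau_prime: "prime (p::nat) \<Longrightarrow> tau p = 2"
proof -
  assume "prime p"
  then have "{d. d dvd p} = {1, p}" "p \<noteq> 1"
    by (auto simp: prime_nat_iff)
  then show ?thesis by (simp add: tau_def)
qed

lemma omega_prime: "prime (p::nat) \<Longrightarrow> omega p = 1"
  by (simp add: omega_def prime_prime_factors)

lemma gamma_one_prime:
  fixes p :: nat
  assumes "prime p"
  shows "gamma 1 p = 0"
proof -
  have "\<not> (prime q \<and> q dvd p \<and> q ^ vacute q p \<le> p)" for q
  proof
    assume q: "prime q \<and> q dvd p \<and> q ^ vacute q p \<le> p"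
    then have "q = p" using assms primes_dvd_imp_eq by blast
    then have "p ^ vacute p p = p" using q le_vacute_power[OF assms, of p] by simp
    then show False using vacute_power_not_dvd_self[OF prime_gt_0_nat assms, of p] assms by simp
  qed
  then have "{q. prime q \<and> q dvd p \<and> q ^ vacute q p \<le> p} = {}" by blast
  then show ?thesis
    using gamma_one_eq_card[OF prime_gt_0_nat[OF assms]] by (metis card.empty)
qed

theorem mainTheorem8:
  fixes n :: nat
  assumes "n \<ge> 2"
  shows "int (Cl_D n) = int (tau n) + int (prime_pi n) - int (omega n) + int (gamma 1 n)
         \<and> (prime n \<longrightarrow> Cl_D n = prime_pi n + 1)"
proof -
  have "n > 0" using assms by simp
  have formula: "int (Cl_D n) = int (tau n) + int (prime_pi n) - int (omega n) + int (gamma 1 n)"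
    using Cl_D_eq_tau_plus_card[OF \<open>n > 0\<close>] card_primes_with_small_vacute_power[OF \<open>n > 0\<close>]
    by simp
  moreover have "Cl_D n = prime_pi n + 1" if "prime n"
    using formula tau_prime[OF that] omega_prime[OF that] gamma_one_prime[OF that] by simp
  ultimately show ?thesis by blast
qed

end
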